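(* Let $N\in\mathbb{N}$ and let $\gamma_1,\dots,\gamma_N\ge 0$. Let $\Phi_1,\dots,\Phi_N$ be independent random variables such that, for each $i$, $\Phi_i$ has the wrapped normal distribution of variance $\gamma_i$, i.e. $\Phi_i$ has the law of $Y_i \bmod 2\pi$ with $Y_i\sim\mathcal{N}(0,\gamma_i)$, with density $$f_{\Phi_i}(y)=\frac{1}{\sqrt{2\pi\gamma_i}}\sum_{m=-\infty}^{\infty}\exp\Big[\frac{-(y+2m\pi)^2}{2\gamma_i}\Big],\qquad 0\le y<2\pi .$$ For $\mathcal{S}\subseteq\{1,\dots,N\}$ define the beamforming gain $\overline{G}(\mathcal{S}):=\sum_{i\in\mathcal{S}}\sum_{j\in\mathcal{S}}\cos(\Phi_i-\Phi_j)$, and let $v_i:=\exp(-\gamma_i)$. Then $$\mathbb{E}\big[\overline{G}(\mathcal{S})\big]=|\mathcal{S}|+\sum_{i\in\mathcal{S}}\sum_{\substack{j\in\mathcal{S}\\ j\ne i}}\sqrt{v_iv_j},$$ $$\mathrm{Var}\big(\overline{G}(\mathcal{S})\big)=\sum_{i\in\mathcal{S}}\sum_{\substack{j\in\mathcal{S}\\ j\ne i}}(1-v_iv_j)^2+2\sum_{i\in\mathcal{S}}\sum_{\substack{j\in\mathcal{S}\\ j\ne i}}\sum_{\substack{k\in\mathcal{S}\\ k\ne i,\ k\ne j}}(1-v_i)^2\sqrt{v_jv_k}.$$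
   Context: Setting: $N$ agents transmit a common signal to a client by distributed beamforming. Because of Gaussian localization errors, after the phase adjustments chosen in the paper, the total phase $\Phi_i$ of agent $i$ is a wrapped normal random variable as described, with $\gamma_i\ge 0$ called the effective localization error of agent $i$; the $\Phi_i$ are independent across agents. The quantity $\overline{G}(\mathcal{S})$ is the beamforming gain of the subset $\mathcal{S}$ of agents participating. *)

theory Defs
  imports "HOL-Probability.Probability"
begin

definition wrap2pi :: "real \<Rightarrow> real" where
  "wrap2pi y = y - 2 * pi * of_int \<lfloor>y / (2 * pi)\<rfloor>"

definition centred_normal :: "real \<Rightarrow> real measure" where
  "centred_normal g =
     (if 0 < g then density lborel (normal_density 0 (sqrt g)) else return borel 0)"

definition wrapped_normal :: "real \<Rightarrow> real measure" where
  "wrapped_normal g = distr (centred_normal g) borel wrap2pi"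

definition beam_gain :: "(nat \<Rightarrow> real) \<Rightarrow> nat set \<Rightarrow> real" where
  "beam_gain \<Phi> S = (\<Sum>i\<in>S. \<Sum>j\<in>S. cos (\<Phi> i - \<Phi> j))"

end

theory Submission
  imports Defs
begin

text \<open>A wrapped normal phase differs from its Gaussian preimage by a multiple of \<open>2\<pi>\<close>, so at integer
  frequencies it has the Gaussian characteristic function:
  \<open>E exp (i n \<Phi>) = exp (- n\<^sup>2 \<gamma> / 2) = \<rho> ^ n\<^sup>2\<close> with \<open>\<rho> = exp (- \<gamma> / 2) = sqrt v\<close>.
  By independence, \<open>E cos (\<Phi>\<^sub>i - \<Phi>\<^sub>j + \<Phi>\<^sub>k - \<Phi>\<^sub>l)\<close> is the product of the \<open>\<rho>\<^sub>t\<close> raised to the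
  squared coefficients of the \<open>\<Phi>\<^sub>t\<close>. The product-to-sum formula expresses the mean and the
  covariances of the summands \<open>cos (\<Phi>\<^sub>i - \<Phi>\<^sub>j)\<close> of the gain through such moments; two summands
  are uncorrelated unless their index pairs meet, and summing the remaining cases gives the
  formula for the variance.\<close>

lemma borel_measurable_cis [measurable]:
  "f \<in> borel_measurable M \<Longrightarrow> (\<lambda>x. cis (f x)) \<in> borel_measurable M"
  by (rule borel_measurable_continuous_on[where f = cis]) (auto intro!: continuous_intros)

lemma cis_sum: "finite A \<Longrightarrow> cis (\<Sum>t\<in>A. f t) = (\<Prod>t\<in>A. cis (f t))"
  by (induction A rule: finite_induct) (auto simp: cis_mult[symmetric])

lemma sets_centred_normal [measurable_cong]: "sets (centred_normal g) = sets borel"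
  by (simp add: centred_normal_def)

lemma borel_measurable_wrap2pi [measurable]: "wrap2pi \<in> borel_measurable borel"
  unfolding wrap2pi_def by measurable

lemma char_centred_normal:
  assumes "0 \<le> g"
  shows "(\<integral>y. cis (c * y) \<partial>centred_normal g) = exp (- (c\<^sup>2 * g) / 2)"
proof (cases "g = 0")
  case True
  then show ?thesis
    by (simp add: centred_normal_def integral_return)
next
  case False
  define \<sigma> where "\<sigma> = sqrt g"
  have "0 < \<sigma>"
    using assms False by (simp add: \<sigma>_def)
  have rescale: "\<sigma> * normal_density 0 \<sigma> (\<sigma> * x) = std_normal_density x" for x
    using \<open>0 < \<sigma>\<close> by (simp add: normal_density_def real_sqrt_mult field_simps power2_eq_square)
  have "(\<integral>y. cis (c * y) \<partial>centred_normal g) = (\<integral>y. normal_density 0 \<sigma> y *\<^sub>R cis (c * y) \<partial>lborel)"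
    using assms False by (simp add: centred_normal_def \<sigma>_def integral_density)
  also have "\<dots> = \<sigma> *\<^sub>R (\<integral>x. normal_density 0 \<sigma> (\<sigma> * x) *\<^sub>R cis (c * (\<sigma> * x)) \<partial>lborel)"
    using lborel_integral_real_affine[where c = \<sigma> and t = 0] \<open>0 < \<sigma>\<close> by simp
  also have "\<dots> = (\<integral>x. std_normal_density x *\<^sub>R cis ((c * \<sigma>) * x) \<partial>lborel)"
    by (simp flip: integral_scaleR_right rescale add: mult.assoc)
  also have "\<dots> = char std_normal_distribution (c * \<sigma>)"
    by (simp add: char_def integral_density cis_conv_exp)
  also have "\<dots> = exp (- (c\<^sup>2 * g) / 2)"
    using assms by (simp add: char_std_normal_distribution \<sigma>_def power_mult_distrib)
  finally show ?thesis .
qed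

lemma cis_int_mult_wrap2pi: "cis (of_int n * wrap2pi y) = cis (of_int n * y)"
proof -
  define k where "k = - n * \<lfloor>y / (2 * pi)\<rfloor>"
  have "of_int n * wrap2pi y = of_int n * y + 2 * pi * of_int k"
    by (simp add: k_def wrap2pi_def algebra_simps)
  then have "cis (of_int n * wrap2pi y) = cis (of_int n * y) * cis (2 * pi * of_int k)"
    by (simp only: cis_mult)
  also have "cis (2 * pi * of_int k) = 1"
    by (rule cis_multiple_2pi) simp
  finally show ?thesis
    by simp
qed

lemma char_wrapped_normal:
  assumes "0 \<le> g"
  shows "(\<integral>y. cis (of_int n * y) \<partial>wrapped_normal g) = exp (- g / 2) ^ nat (n\<^sup>2)"
proof -
  have "(\<integral>y. cis (of_int n * y) \<partial>wrapped_normal g) = (\<integral>y. cis (of_int n * y) \<partial>centred_normal g)"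
    by (simp add: wrapped_normal_def integral_distr cis_int_mult_wrap2pi)
  also have "\<dots> = exp (real (nat (n\<^sup>2)) * (- g / 2))"
    using char_centred_normal[OF assms] by simp
  finally show ?thesis
    by (simp only: exp_of_nat_mult of_real_power)
qed

lemma (in prob_space) expectation_cis_sum_indep:
  fixes X :: "'i \<Rightarrow> 'a \<Rightarrow> real"
  assumes "finite A" and indep: "indep_vars (\<lambda>_. borel) X A"
  shows "expectation (\<lambda>\<omega>. cis (\<Sum>t\<in>A. c t * X t \<omega>)) = (\<Prod>t\<in>A. expectation (\<lambda>\<omega>. cis (c t * X t \<omega>)))"
proof -
  have "indep_vars (\<lambda>_. borel) (\<lambda>t \<omega>. cis (c t * X t \<omega>)) A"
    by (rule indep_vars_compose2[OF indep]) simp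
  moreover have "integrable M (\<lambda>\<omega>. cis (c t * X t \<omega>))" if "t \<in> A" for t
    using that indep by (intro integrable_const_bound[where B = 1]) (auto simp: indep_vars_def)
  ultimately show ?thesis
    using \<open>finite A\<close> by (simp add: cis_sum indep_vars_lebesgue_integral)
qed

definition (in prob_space) covariance :: "('a \<Rightarrow> real) \<Rightarrow> ('a \<Rightarrow> real) \<Rightarrow> real" where
  "covariance X Y = expectation (\<lambda>\<omega>. (X \<omega> - expectation X) * (Y \<omega> - expectation Y))"

lemma (in prob_space) integrable_centred_product:
  fixes X Y :: "'a \<Rightarrow> real"
  assumes "integrable M X" "integrable M Y" "integrable M (\<lambda>\<omega>. X \<omega> * Y \<omega>)"
  shows "integrable M (\<lambda>\<omega>. (X \<omega> - a) * (Y \<omega> - b))"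
proof -
  have "(\<lambda>\<omega>. (X \<omega> - a) * (Y \<omega> - b)) = (\<lambda>\<omega>. X \<omega> * Y \<omega> - b * X \<omega> - a * Y \<omega> + a * b)"
    by (simp add: algebra_simps)
  then show ?thesis
    using assms by simp
qed

lemma (in prob_space) covariance_eq:
  assumes "integrable M X" "integrable M Y" "integrable M (\<lambda>\<omega>. X \<omega> * Y \<omega>)"
  shows "covariance X Y = expectation (\<lambda>\<omega>. X \<omega> * Y \<omega>) - expectation X * expectation Y"
proof -
  have "(\<lambda>\<omega>. (X \<omega> - expectation X) * (Y \<omega> - expectation Y))
      = (\<lambda>\<omega>. X \<omega> * Y \<omega> - expectation Y * X \<omega> - expectation X * Y \<omega> + expectation X * expectation Y)"
    by (simp add: algebra_simps)
  then show ?thesis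
    using assms by (simp add: covariance_def prob_space)
qed

lemma (in prob_space) variance_sum:
  fixes X :: "'i \<Rightarrow> 'a \<Rightarrow> real"
  assumes "finite I" "\<And>i. i \<in> I \<Longrightarrow> integrable M (X i)"
    and "\<And>i j. i \<in> I \<Longrightarrow> j \<in> I \<Longrightarrow> integrable M (\<lambda>\<omega>. X i \<omega> * X j \<omega>)"
  shows "variance (\<lambda>\<omega>. \<Sum>i\<in>I. X i \<omega>) = (\<Sum>i\<in>I. \<Sum>j\<in>I. covariance (X i) (X j))"
proof -
  define Y where "Y i \<omega> = X i \<omega> - expectation (X i)" for i \<omega>
  have "(\<Sum>i\<in>I. X i \<omega>) - expectation (\<lambda>\<omega>. \<Sum>i\<in>I. X i \<omega>) = (\<Sum>i\<in>I. Y i \<omega>)" for \<omega>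
    using assms(2) by (simp add: Y_def sum_subtractf)
  then have "variance (\<lambda>\<omega>. \<Sum>i\<in>I. X i \<omega>) = expectation (\<lambda>\<omega>. \<Sum>i\<in>I. \<Sum>j\<in>I. Y i \<omega> * Y j \<omega>)"
    by (simp add: power2_eq_square sum_product)
  also have "\<dots> = (\<Sum>i\<in>I. \<Sum>j\<in>I. expectation (\<lambda>\<omega>. Y i \<omega> * Y j \<omega>))"
    using assms by (simp add: Y_def integrable_centred_product)
  finally show ?thesis
    by (simp add: Y_def covariance_def)
qed

definition quad_coeff :: "nat \<Rightarrow> nat \<Rightarrow> nat \<Rightarrow> nat \<Rightarrow> nat \<Rightarrow> int" where
  "quad_coeff i j k l t = of_bool (t = i) - of_bool (t = j) + of_bool (t = k) - of_bool (t = l)"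

lemma sum_quad_coeff:
  fixes f :: "nat \<Rightarrow> real"
  assumes "finite A" "{i, j, k, l} \<subseteq> A"
  shows "(\<Sum>t\<in>A. of_int (quad_coeff i j k l t) * f t) = f i - f j + f k - f l"
proof -
  have "of_int (quad_coeff i j k l t) * f t = (if t = i then f t else 0) - (if t = j then f t else 0)
      + (if t = k then f t else 0) - (if t = l then f t else 0)" for t
    by (simp add: quad_coeff_def algebra_simps)
  then show ?thesis
    using assms by (simp only: sum.distrib sum_subtractf) (simp add: sum.delta')
qed

text \<open>\<open>E cos (\<Phi>\<^sub>i - \<Phi>\<^sub>j + \<Phi>\<^sub>k - \<Phi>\<^sub>l)\<close> for independent phases with \<open>E exp (i n \<Phi>\<^sub>t) = \<rho>\<^sub>t ^ n\<^sup>2\<close>.\<close>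

definition phase_moment :: "(nat \<Rightarrow> real) \<Rightarrow> nat \<Rightarrow> nat \<Rightarrow> nat \<Rightarrow> nat \<Rightarrow> real" where
  "phase_moment \<rho> i j k l = (\<Prod>t\<in>{i, j, k, l}. \<rho> t ^ nat ((quad_coeff i j k l t)\<^sup>2))"

text \<open>Closed form of the covariance of \<open>cos (\<Phi>\<^sub>i - \<Phi>\<^sub>j)\<close> and \<open>cos (\<Phi>\<^sub>k - \<Phi>\<^sub>l)\<close>.\<close>

definition gain_cov :: "(nat \<Rightarrow> real) \<Rightarrow> nat \<Rightarrow> nat \<Rightarrow> nat \<Rightarrow> nat \<Rightarrow> real" where
  "gain_cov \<rho> i j k l =
     (if i = j then 0 else
        (if k = i \<and> l = j then (1 - \<rho> i ^ 2 * \<rho> j ^ 2)\<^sup>2 / 2 else 0)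
      + (if k = j \<and> l = i then (1 - \<rho> i ^ 2 * \<rho> j ^ 2)\<^sup>2 / 2 else 0)
      + (if k = i \<and> l \<notin> {i, j} then (1 - \<rho> i ^ 2)\<^sup>2 / 2 * \<rho> j * \<rho> l else 0)
      + (if l = i \<and> k \<notin> {i, j} then (1 - \<rho> i ^ 2)\<^sup>2 / 2 * \<rho> j * \<rho> k else 0)
      + (if k = j \<and> l \<notin> {i, j} then (1 - \<rho> j ^ 2)\<^sup>2 / 2 * \<rho> i * \<rho> l else 0)
      + (if l = j \<and> k \<notin> {i, j} then (1 - \<rho> j ^ 2)\<^sup>2 / 2 * \<rho> i * \<rho> k else 0))"

lemma phase_moment_pair: "phase_moment \<rho> i j i i = (if i = j then 1 else \<rho> i * \<rho> j)"
  by (simp add: phase_moment_def quad_coeff_def insert_commute)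

lemma phase_moment_covariance:
  "(phase_moment \<rho> i j k l + phase_moment \<rho> i j l k) / 2 - phase_moment \<rho> i j i i * phase_moment \<rho> k l k k
     = gain_cov \<rho> i j k l"
  unfolding phase_moment_def quad_coeff_def gain_cov_def
  by (cases "i = j"; cases "i = k"; cases "i = l"; cases "j = k"; cases "j = l"; cases "k = l")
     (simp_all add: insert_commute power2_eq_square algebra_simps eval_nat_numeral)

lemma sum_sum_if_eq_fst:
  fixes f :: "'a \<Rightarrow> 'b::comm_monoid_add"
  assumes "finite S" "a \<in> S"
  shows "(\<Sum>k\<in>S. \<Sum>l\<in>S. if k = a \<and> P l then f l else 0) = (\<Sum>l\<in>S. if P l then f l else 0)"
proof -
  have "(\<Sum>l\<in>S. if k = a \<and> P l then f l else 0) = (if k = a then \<Sum>l\<in>S. if P l then f l else 0 else 0)" for k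
    by simp
  then show ?thesis
    using assms by (simp add: sum.delta)
qed

lemma sum_sum_if_eq_snd:
  fixes f :: "'a \<Rightarrow> 'b::comm_monoid_add"
  assumes "finite S" "a \<in> S"
  shows "(\<Sum>k\<in>S. \<Sum>l\<in>S. if l = a \<and> P k then f k else 0) = (\<Sum>k\<in>S. if P k then f k else 0)"
  by (subst sum.swap) (rule sum_sum_if_eq_fst[OF assms])

lemma sum_if_notin:
  fixes f :: "'a \<Rightarrow> 'b::comm_monoid_add"
  assumes "finite S"
  shows "(\<Sum>l\<in>S. if l \<notin> A then f l else 0) = sum f (S - A)"
proof -
  have "S - A = {l \<in> S. l \<notin> A}"
    by blast
  then show ?thesis
    using assms by (simp add: sum.inter_filter)
qed

lemma sum_offdiag_swap:
  "finite S \<Longrightarrow> (\<Sum>i\<in>S. \<Sum>j\<in>S - {i}. f i j) = (\<Sum>j\<in>S. \<Sum>i\<in>S - {j}. f i j)"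
  using sum.swap_restrict[where A = S and B = S and R = "\<lambda>i j. j \<noteq> i" and g = f]
  by (simp add: set_diff_eq eq_commute)

lemma sum_sum_gain_cov:
  assumes "finite S" "i \<in> S" "j \<in> S" "i \<noteq> j"
  shows "(\<Sum>k\<in>S. \<Sum>l\<in>S. gain_cov \<rho> i j k l) = (1 - \<rho> i ^ 2 * \<rho> j ^ 2)\<^sup>2
     + (\<Sum>l\<in>S - {i, j}. (1 - \<rho> i ^ 2)\<^sup>2 * \<rho> j * \<rho> l)
     + (\<Sum>l\<in>S - {i, j}. (1 - \<rho> j ^ 2)\<^sup>2 * \<rho> i * \<rho> l)"
  using assms
  by (simp add: gain_cov_def sum.distrib sum_sum_if_eq_fst sum_sum_if_eq_snd sum_if_notin
      flip: sum_divide_distrib del: insert_iff)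

lemma sum_gain_cov:
  assumes "finite S"
  shows "(\<Sum>i\<in>S. \<Sum>j\<in>S. \<Sum>k\<in>S. \<Sum>l\<in>S. gain_cov \<rho> i j k l)
     = (\<Sum>i\<in>S. \<Sum>j\<in>S - {i}. (1 - \<rho> i ^ 2 * \<rho> j ^ 2)\<^sup>2)
       + 2 * (\<Sum>i\<in>S. \<Sum>j\<in>S - {i}. \<Sum>k\<in>S - {i, j}. (1 - \<rho> i ^ 2)\<^sup>2 * \<rho> j * \<rho> k)"
proof -
  have "(\<Sum>j\<in>S. \<Sum>k\<in>S. \<Sum>l\<in>S. gain_cov \<rho> i j k l) = (\<Sum>j\<in>S - {i}. \<Sum>k\<in>S. \<Sum>l\<in>S. gain_cov \<rho> i j k l)"
    if "i \<in> S" for i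
    using sum.remove[OF assms that, of "\<lambda>j. \<Sum>k\<in>S. \<Sum>l\<in>S. gain_cov \<rho> i j k l"]
    by (simp add: gain_cov_def)
  then have "(\<Sum>i\<in>S. \<Sum>j\<in>S. \<Sum>k\<in>S. \<Sum>l\<in>S. gain_cov \<rho> i j k l)
      = (\<Sum>i\<in>S. \<Sum>j\<in>S - {i}. (1 - \<rho> i ^ 2 * \<rho> j ^ 2)\<^sup>2)
        + (\<Sum>i\<in>S. \<Sum>j\<in>S - {i}. \<Sum>k\<in>S - {i, j}. (1 - \<rho> i ^ 2)\<^sup>2 * \<rho> j * \<rho> k)
        + (\<Sum>i\<in>S. \<Sum>j\<in>S - {i}. \<Sum>k\<in>S - {i, j}. (1 - \<rho> j ^ 2)\<^sup>2 * \<rho> i * \<rho> k)"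
    using assms by (simp add: sum_sum_gain_cov sum.distrib)
  also have "(\<Sum>i\<in>S. \<Sum>j\<in>S - {i}. \<Sum>k\<in>S - {i, j}. (1 - \<rho> j ^ 2)\<^sup>2 * \<rho> i * \<rho> k)
      = (\<Sum>i\<in>S. \<Sum>j\<in>S - {i}. \<Sum>k\<in>S - {i, j}. (1 - \<rho> i ^ 2)\<^sup>2 * \<rho> j * \<rho> k)"
    using sum_offdiag_swap[OF assms, of "\<lambda>i j. \<Sum>k\<in>S - {i, j}. (1 - \<rho> j ^ 2)\<^sup>2 * \<rho> i * \<rho> k"]
    by (simp add: insert_commute)
  finally show ?thesis
    by simp
qed

lemma sum_phase_moment_pair:
  assumes "finite S"
  shows "(\<Sum>i\<in>S. \<Sum>j\<in>S. phase_moment \<rho> i j i i) = real (card S) + (\<Sum>i\<in>S. \<Sum>j\<in>S - {i}. \<rho> i * \<rho> j)"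
proof -
  have "(\<Sum>j\<in>S. phase_moment \<rho> i j i i) = 1 + (\<Sum>j\<in>S - {i}. \<rho> i * \<rho> j)" if "i \<in> S" for i
    using sum.remove[OF assms that, of "\<lambda>j. phase_moment \<rho> i j i i"] by (simp add: phase_moment_pair)
  then show ?thesis
    by (simp add: sum.distrib)
qed

locale wrapped_normal_phases = prob_space +
  fixes N :: nat and \<gamma> :: "nat \<Rightarrow> real" and \<Phi> :: "nat \<Rightarrow> 'a \<Rightarrow> real"
  assumes variance_nonneg: "\<And>i. i \<in> {1..N} \<Longrightarrow> 0 \<le> \<gamma> i"
    and indep_phases: "indep_vars (\<lambda>_. borel) \<Phi> {1..N}"
    and distr_phase: "\<And>i. i \<in> {1..N} \<Longrightarrow> distr M borel (\<Phi> i) = wrapped_normal (\<gamma> i)"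
begin

definition mean_resultant :: "nat \<Rightarrow> real" where
  "mean_resultant t = exp (- \<gamma> t / 2)"

lemma measurable_phase: "i \<in> {1..N} \<Longrightarrow> \<Phi> i \<in> borel_measurable M"
  using indep_phases by (simp add: indep_vars_def)

lemma expectation_cis_phase:
  assumes "t \<in> {1..N}"
  shows "expectation (\<lambda>\<omega>. cis (of_int n * \<Phi> t \<omega>)) = mean_resultant t ^ nat (n\<^sup>2)"
proof -
  have "expectation (\<lambda>\<omega>. cis (of_int n * \<Phi> t \<omega>)) = (\<integral>y. cis (of_int n * y) \<partial>distr M borel (\<Phi> t))"
    using measurable_phase[OF assms] by (simp add: integral_distr)
  then show ?thesis
    using assms by (simp add: distr_phase char_wrapped_normal variance_nonneg mean_resultant_def)
qed

lemma expectation_cos_lincomb: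
  assumes "A \<subseteq> {1..N}"
  shows "expectation (\<lambda>\<omega>. cos (\<Sum>t\<in>A. of_int (c t) * \<Phi> t \<omega>)) = (\<Prod>t\<in>A. mean_resultant t ^ nat ((c t)\<^sup>2))"
proof -
  have "finite A"
    using assms finite_subset by blast
  have "integrable M (\<lambda>\<omega>. cis (\<Sum>t\<in>A. of_int (c t) * \<Phi> t \<omega>))"
    using assms measurable_phase
    by (intro integrable_const_bound[where B = 1] borel_measurable_cis borel_measurable_sum) auto
  then have "expectation (\<lambda>\<omega>. cos (\<Sum>t\<in>A. of_int (c t) * \<Phi> t \<omega>))
      = Re (expectation (\<lambda>\<omega>. cis (\<Sum>t\<in>A. of_int (c t) * \<Phi> t \<omega>)))"
    by (simp flip: integral_Re)
  also have "\<dots> = (\<Prod>t\<in>A. mean_resultant t ^ nat ((c t)\<^sup>2))"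
    using assms \<open>finite A\<close> indep_vars_subset[OF indep_phases assms]
    by (simp add: expectation_cis_sum_indep expectation_cis_phase subset_iff flip: of_real_power of_real_prod)
  finally show ?thesis .
qed

lemma expectation_cos_quad:
  assumes "{i, j, k, l} \<subseteq> {1..N}"
  shows "expectation (\<lambda>\<omega>. cos (\<Phi> i \<omega> - \<Phi> j \<omega> + \<Phi> k \<omega> - \<Phi> l \<omega>)) = phase_moment mean_resultant i j k l"
  using expectation_cos_lincomb[OF assms, of "quad_coeff i j k l"]
  by (simp add: sum_quad_coeff phase_moment_def)

lemma integrable_cos_phase_diff:
  "{i, j} \<subseteq> {1..N} \<Longrightarrow> integrable M (\<lambda>\<omega>. cos (\<Phi> i \<omega> - \<Phi> j \<omega>))"
  using measurable_phase by (intro integrable_const_bound[where B = 1]) auto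

lemma integrable_cos_phase_diff_mult:
  "{i, j, k, l} \<subseteq> {1..N} \<Longrightarrow> integrable M (\<lambda>\<omega>. cos (\<Phi> i \<omega> - \<Phi> j \<omega>) * cos (\<Phi> k \<omega> - \<Phi> l \<omega>))"
  using measurable_phase
  by (intro integrable_const_bound[where B = 1]) (auto simp: abs_mult intro!: mult_le_one)

lemma expectation_cos_phase_diff:
  "{i, j} \<subseteq> {1..N} \<Longrightarrow> expectation (\<lambda>\<omega>. cos (\<Phi> i \<omega> - \<Phi> j \<omega>)) = phase_moment mean_resultant i j i i"
  using expectation_cos_quad[of i j i i] by simp

lemma covariance_cos_phase_diff:
  assumes "{i, j, k, l} \<subseteq> {1..N}"
  shows "covariance (\<lambda>\<omega>. cos (\<Phi> i \<omega> - \<Phi> j \<omega>)) (\<lambda>\<omega>. cos (\<Phi> k \<omega> - \<Phi> l \<omega>))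
    = gain_cov mean_resultant i j k l"
proof -
  let ?W = "\<lambda>i j \<omega>. cos (\<Phi> i \<omega> - \<Phi> j \<omega>)"
  let ?C = "\<lambda>i j k l \<omega>. cos (\<Phi> i \<omega> - \<Phi> j \<omega> + \<Phi> k \<omega> - \<Phi> l \<omega>)"
  have "{i, j, l, k} \<subseteq> {1..N}"
    using assms by auto
  have integrable: "integrable M (?C i j k l)" "integrable M (?C i j l k)"
    using assms measurable_phase by (auto intro!: integrable_const_bound[where B = 1])
  have product: "(\<lambda>\<omega>. ?W i j \<omega> * ?W k l \<omega>) = (\<lambda>\<omega>. (?C i j k l \<omega> + ?C i j l k \<omega>) / 2)"
    by (simp add: fun_eq_iff cos_times_cos algebra_simps)
  have "covariance (?W i j) (?W k l)
      = expectation (\<lambda>\<omega>. ?W i j \<omega> * ?W k l \<omega>) - expectation (?W i j) * expectation (?W k l)"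
    using assms by (intro covariance_eq integrable_cos_phase_diff integrable_cos_phase_diff_mult) auto
  also have "\<dots> = (phase_moment mean_resultant i j k l + phase_moment mean_resultant i j l k) / 2
      - phase_moment mean_resultant i j i i * phase_moment mean_resultant k l k k"
    using assms integrable unfolding product
    by (simp add: expectation_cos_quad[OF assms] expectation_cos_quad[OF \<open>{i, j, l, k} \<subseteq> {1..N}\<close>]
        expectation_cos_phase_diff)
  also have "\<dots> = gain_cov mean_resultant i j k l"
    by (rule phase_moment_covariance)
  finally show ?thesis .
qed

lemma expectation_beam_gain:
  assumes "S \<subseteq> {1..N}"
  shows "expectation (\<lambda>\<omega>. beam_gain (\<lambda>i. \<Phi> i \<omega>) S) = (\<Sum>i\<in>S. \<Sum>j\<in>S. phase_moment mean_resultant i j i i)"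
  using assms by (simp add: beam_gain_def integrable_cos_phase_diff expectation_cos_phase_diff subset_iff)

lemma variance_beam_gain:
  assumes "S \<subseteq> {1..N}"
  shows "variance (\<lambda>\<omega>. beam_gain (\<lambda>i. \<Phi> i \<omega>) S)
    = (\<Sum>i\<in>S. \<Sum>j\<in>S. \<Sum>k\<in>S. \<Sum>l\<in>S. gain_cov mean_resultant i j k l)"
proof -
  define W where "W = (\<lambda>(i, j) \<omega>. cos (\<Phi> i \<omega> - \<Phi> j \<omega>))"
  have "finite (S \<times> S)"
    using assms finite_subset by blast
  have "beam_gain (\<lambda>i. \<Phi> i \<omega>) S = (\<Sum>p\<in>S \<times> S. W p \<omega>)" for \<omega>
    by (simp add: beam_gain_def W_def sum.cartesian_product case_prod_beta)
  then have "variance (\<lambda>\<omega>. beam_gain (\<lambda>i. \<Phi> i \<omega>) S) = variance (\<lambda>\<omega>. \<Sum>p\<in>S \<times> S. W p \<omega>)"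
    by simp
  also have "\<dots> = (\<Sum>p\<in>S \<times> S. \<Sum>q\<in>S \<times> S. covariance (W p) (W q))"
  proof (rule variance_sum[OF \<open>finite (S \<times> S)\<close>])
    show "integrable M (W p)" if "p \<in> S \<times> S" for p
      using that assms by (auto simp: W_def intro!: integrable_cos_phase_diff)
    show "integrable M (\<lambda>\<omega>. W p \<omega> * W q \<omega>)" if "p \<in> S \<times> S" "q \<in> S \<times> S" for p q
      using that assms by (auto simp: W_def intro!: integrable_cos_phase_diff_mult)
  qed
  also have "\<dots> = (\<Sum>(i, j)\<in>S \<times> S. \<Sum>(k, l)\<in>S \<times> S. gain_cov mean_resultant i j k l)"
    using assms by (auto simp: W_def intro!: sum.cong covariance_cos_phase_diff)
  finally show ?thesis
    by (simp only: sum.cartesian_product[symmetric])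
qed

end

theorem lemma1:
  fixes M :: "'a measure" and N :: nat and \<gamma> :: "nat \<Rightarrow> real"
    and \<Phi> :: "nat \<Rightarrow> 'a \<Rightarrow> real" and S :: "nat set"
  assumes "prob_space M"
    and "\<And>i. i \<in> {1..N} \<Longrightarrow> 0 \<le> \<gamma> i"
    and "prob_space.indep_vars M (\<lambda>_. borel) \<Phi> {1..N}"
    and "\<And>i. i \<in> {1..N} \<Longrightarrow> \<Phi> i \<in> borel_measurable M"
    and "\<And>i. i \<in> {1..N} \<Longrightarrow> distr M borel (\<Phi> i) = wrapped_normal (\<gamma> i)"
    and "S \<subseteq> {1..N}"
  defines "v \<equiv> \<lambda>i. exp (- \<gamma> i)"
  shows "(prob_space.expectation M (\<lambda>\<omega>. beam_gain (\<lambda>i. \<Phi> i \<omega>) S)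
           = real (card S) + (\<Sum>i\<in>S. \<Sum>j\<in>S - {i}. sqrt (v i * v j)))
         \<and> (prob_space.variance M (\<lambda>\<omega>. beam_gain (\<lambda>i. \<Phi> i \<omega>) S)
           = (\<Sum>i\<in>S. \<Sum>j\<in>S - {i}. (1 - v i * v j)\<^sup>2)
             + 2 * (\<Sum>i\<in>S. \<Sum>j\<in>S - {i}. \<Sum>k\<in>S - {i, j}. (1 - v i)\<^sup>2 * sqrt (v j * v k)))"
proof -
  interpret wrapped_normal_phases M N \<gamma> \<Phi>
    using assms(1-3,5) by (simp add: wrapped_normal_phases_def wrapped_normal_phases_axioms_def)
  have "finite S"
    using assms(6) finite_subset by blast
  have v: "v i = mean_resultant i ^ 2" for i
    by (simp add: v_def mean_resultant_def power2_eq_square flip: exp_add)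
  have sqrt_v: "sqrt (mean_resultant i ^ 2 * mean_resultant j ^ 2) = mean_resultant i * mean_resultant j" for i j
    by (simp add: mean_resultant_def real_sqrt_mult)
  show ?thesis
    using expectation_beam_gain[OF assms(6)] variance_beam_gain[OF assms(6)]
      sum_phase_moment_pair[OF \<open>finite S\<close>] sum_gain_cov[OF \<open>finite S\<close>]
    by (simp only: v sqrt_v mult.assoc)
qed

end
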